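(* Let $K=\mathbb{Q}[\sqrt{d}]$ with $d>1$ a square-free integer, let $\mathfrak{o}_K$ be its ring of integers, let $\epsilon>1$ be the fundamental unit of $\mathfrak{o}_K$, and let $C_2=\langle g\rangle$. Let $n$ be the order of $\epsilon$ modulo $2\mathfrak{o}_K$ (i.e. the least $n\ge 1$ with $\epsilon^n\in 1+2\mathfrak{o}_K$). Then $$\mathcal{U}_1(\mathfrak{o}_K[C_2])=\langle g\rangle\times\left\langle \tfrac{1+\epsilon^n}{2}+\tfrac{1-\epsilon^n}{2}g\right\rangle\cong C_2\times\mathbb{Z}.$$
   Context: The fundamental unit $\epsilon$ is the unique unit $\epsilon>1$ of $\mathfrak{o}_K$ with $\mathcal{U}(\mathfrak{o}_K)=\pm\langle\epsilon\rangle$. $\mathcal{U}_1(\mathfrak{o}_K[C_2])$ is the group of units of augmentation $1$ in the group ring $\mathfrak{o}_K[C_2]$. *)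

theory Defs
  imports Complex_Main "HOL-Computational_Algebra.Polynomial" "HOL-Computational_Algebra.Squarefree"
    "HOL-Algebra.Elementary_Groups"
begin

definition quad_field :: "int \<Rightarrow> real set" where
  "quad_field d = {of_rat a + of_rat b * sqrt (of_int d) | a b. True}"

definition ring_of_integers :: "int \<Rightarrow> real set" where
  "ring_of_integers d = {x \<in> quad_field d. \<exists>p :: int poly. lead_coeff p = 1 \<and>
                            poly (map_poly of_int p) x = 0}"

definition int_units :: "int \<Rightarrow> real set" where
  "int_units d = {x \<in> ring_of_integers d. \<exists>y \<in> ring_of_integers d. x * y = 1}"

definition fundamental_unit :: "int \<Rightarrow> real \<Rightarrow> bool" where
  "fundamental_unit d eps \<longleftrightarrow> eps \<in> ring_of_integers d \<and> eps > 1 \<and>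
     int_units d = {s * eps powi k | s k. s \<in> {1, -1}}"

text \<open>Group ring o_K[C_2]: the element a + b g is represented by the pair (a, b), g^2 = 1.\<close>
definition gr_mult :: "real \<times> real \<Rightarrow> real \<times> real \<Rightarrow> real \<times> real" where
  "gr_mult x y = (fst x * fst y + snd x * snd y, fst x * snd y + snd x * fst y)"

definition group_ring_monoid :: "int \<Rightarrow> (real \<times> real) monoid" where
  "group_ring_monoid d = \<lparr>carrier = ring_of_integers d \<times> ring_of_integers d,
                          mult = gr_mult, one = (1, 0)\<rparr>"

definition gen_g :: "real \<times> real" where
  "gen_g = (0, 1)"

definition U1 :: "int \<Rightarrow> (real \<times> real) monoid" where
  "U1 d = \<lparr>carrier = {x \<in> Units (group_ring_monoid d). fst x + snd x = 1},
           mult = gr_mult, one = (1, 0)\<rparr>"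

definition order_mod_2 :: "int \<Rightarrow> real \<Rightarrow> nat" where
  "order_mod_2 d eps = (LEAST n. n \<ge> 1 \<and> (eps ^ n - 1) / 2 \<in> ring_of_integers d)"

end

theory Submission
  imports Defs "Berlekamp_Zassenhaus.Factor_Bound"
begin

text \<open>
  The two characters of \<open>C\<^sub>2\<close> send \<open>a + b g\<close> to \<open>a + b\<close> and \<open>a - b\<close>,
  so \<open>a + b g\<close> is a unit of \<open>\<O>\<^sub>K[C\<^sub>2]\<close> iff both are units of \<open>\<O>\<^sub>K\<close>.
  With augmentation \<open>a + b = 1\<close> the element is determined by the unit \<open>v = a - b\<close>,
  namely \<open>a = (1 + v)/2\<close>, \<open>b = (1 - v)/2\<close>, and these are integral iff
  \<open>v \<equiv> 1 mod 2\<O>\<^sub>K\<close>. So \<open>U\<^sub>1\<close> is the group of units congruent to 1 modulo 2.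
  As \<open>-1 \<equiv> 1\<close> and every unit is \<open>\<plusminus>\<epsilon>\<^sup>m\<close>, that group is \<open>\<plusminus>\<langle>\<epsilon>\<^sup>n\<rangle>\<close>;
  here \<open>n\<close> exists because \<open>\<O>\<^sub>K/2\<O>\<^sub>K\<close> is finite, which follows from
  \<open>\<O>\<^sub>K = \<int>[\<omega>]\<close>. The latter holds because, by Gauss's lemma, the minimal polynomial
  of an algebraic integer \<open>a + b\<surd>d\<close> has integer coefficients.
\<close>

lemma int_square_mod_4: "(x::int) * x mod 4 = (if even x then 0 else 1)"
proof (cases "even x")
  case True
  then obtain k where "x = 2 * k" by blast
  then show ?thesis by simp
next
  case False
  then obtain k where "x = 2 * k + 1" using oddE by blast
  then have "x * x = 4 * (k * k + k) + 1" by (simp add: algebra_simps)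
  with False show ?thesis by presburger
qed

lemma squarefree_int_not_4_dvd:
  assumes "squarefree (d::int)" shows "\<not> 4 dvd d"
proof
  assume "4 dvd d"
  then have "2 ^ 2 dvd d" by simp
  with assms have "is_unit (2::int)" by (rule squarefreeD)
  then show False by simp
qed

lemma norm_form_parity:
  fixes A B d N :: int
  assumes "squarefree d" and "A * A - d * (B * B) = 4 * N"
  shows "(d mod 4 = 1 \<longrightarrow> even (A - B)) \<and> (d mod 4 \<noteq> 1 \<longrightarrow> even A \<and> even B)"
proof -
  have "A * A = d * (B * B) + 4 * N" using assms(2) by linarith
  then have "A * A mod 4 = (d * (B * B)) mod 4" by simp
  also have "\<dots> = (d mod 4) * (B * B mod 4) mod 4" by (simp add: mod_mult_eq)
  finally have "(if even A then 0 else 1) = (d mod 4) * (if even B then 0 else 1) mod (4::int)"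
    by (simp add: int_square_mod_4)
  moreover have "d mod 4 = 1 \<or> d mod 4 = 2 \<or> d mod 4 = 3"
    using squarefree_int_not_4_dvd[OF assms(1)] by presburger
  ultimately show ?thesis by (cases "even A"; cases "even B"; elim disjE; simp)
qed

lemma square_mult_squarefree_Ints:
  fixes c :: rat and d M :: int
  assumes "squarefree d" and "c * c * of_int d = of_int M"
  shows "c \<in> \<int>"
proof -
  obtain u v where q: "quotient_of c = (u, v)" by force
  have c: "c = of_int u / of_int v" using q by (rule quotient_of_div)
  have v: "v > 0" using q by (rule quotient_of_denom_pos)
  have "algebraic_semidom_class.coprime u v" using q by (rule quotient_of_coprime)
  then have cop: "algebraic_semidom_class.coprime (v * v) (u * u)"
    by (simp add: algebraic_semidom_class.coprime_commute)
  have "of_int (u * u * d) = (of_int (M * v * v) :: rat)"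
    using assms(2) v unfolding c by (simp add: field_simps)
  then have "(u * u) * d = (v * v) * M" by (simp only: of_int_eq_iff) (simp add: algebra_simps)
  then have "v * v dvd (u * u) * d" by (metis dvd_triv_left)
  with cop have "v ^ 2 dvd d" by (simp add: coprime_dvd_mult_right_iff power2_eq_square)
  with assms(1) have "is_unit v" by (rule squarefreeD)
  with v have "v = 1" by (simp add: zdvd1_eq)
  then show ?thesis using c by simp
qed

section \<open>Roots of monic integer polynomials\<close>

lemma monic_factor_of_monic_int_poly:
  fixes p :: "int poly" and g h :: "rat poly"
  assumes "lead_coeff p = 1" and "of_int_poly p = g * h" and "lead_coeff g = 1"
  obtains g' where "g = of_int_poly g'"
proof -
  obtain r rg where RG: "rat_to_normalized_int_poly g = (r, rg)" by force
  from rat_to_int_factor_explicit[OF assms(2) RG]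
  obtain t where "p = rg * Polynomial.smult (content p) t" by blast
  then have "lead_coeff rg dvd 1" using assms(1) by (metis dvdI lead_coeff_mult)
  then have rg: "lead_coeff rg = 1 \<or> lead_coeff rg = -1" using zdvd1_eq by auto
  have g: "g = Polynomial.smult r (of_int_poly rg)" and "r > 0"
    using rat_to_normalized_int_poly[OF RG] by auto
  with assms(3) have "r * of_int (lead_coeff rg) = 1" by simp
  with rg \<open>r > 0\<close> have "r = 1" by (auto simp: mult_less_0_iff)
  with g show ?thesis using that by simp
qed

lemma rat_root_of_monic_int_poly:
  fixes p :: "int poly" and q :: rat
  assumes "lead_coeff p = 1" and "poly (of_int_poly p) q = 0"
  shows "q \<in> \<int>"
proof -
  from assms(2) obtain h where "of_int_poly p = [:-q, 1:] * h"
    by (auto simp: poly_eq_0_iff_dvd)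
  from monic_factor_of_monic_int_poly[OF assms(1) this]
  obtain g' where "[:-q, 1:] = of_int_poly g'" by auto
  then have "- q = of_int (Polynomial.coeff g' 0)"
    by (metis coeff_pCons_0 of_int_hom.coeff_map_poly_hom)
  then have "q = of_int (- Polynomial.coeff g' 0)" by simp
  then show ?thesis by simp
qed

lemma sqrt_squarefree_not_Rats:
  fixes d :: int
  assumes "d > 1" and "squarefree d"
  shows "sqrt (of_int d) \<notin> \<rat>"
proof
  assume "sqrt (of_int d) \<in> \<rat>"
  then obtain q where q: "sqrt (of_int d) = of_rat q" by (metis Rats_cases)
  have "sqrt (of_int d) * sqrt (of_int d) = (of_int d :: real)" using assms(1) by simp
  then have "of_rat (q * q) = (of_int d :: real)" using q by (simp add: of_rat_mult)
  then have qq: "q * q = of_int d" by (metis of_rat_eq_iff of_rat_of_int_eq)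
  then have "poly (of_int_poly [:-d, 0, 1:]) q = 0" by simp
  then have "q \<in> \<int>" by (rule rat_root_of_monic_int_poly[rotated]) simp
  then obtain k where "q = of_int k" by (metis Ints_cases)
  with qq have "k ^ 2 = d" by (metis of_int_eq_iff of_int_mult power2_eq_square)
  with assms(2) have "is_unit k" by (metis dvd_refl squarefreeD)
  then have "\<bar>k\<bar> = 1" by simp
  then have "k ^ 2 = 1" by (metis power2_abs power_one)
  with \<open>k ^ 2 = d\<close> assms(1) show False by simp
qed

lemma quadratic_min_poly_dvd:
  fixes P :: "rat poly" and a b :: rat and d :: int
  assumes irr: "sqrt (of_int d) \<notin> \<rat>" and "d \<ge> 0" and "b \<noteq> 0"
    and root: "poly (map_poly of_rat P) (of_rat a + of_rat b * sqrt (of_int d)) = (0::real)"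
  shows "[:a * a - of_int d * b * b, - 2 * a, 1:] dvd P"
proof -
  interpret of_rat_poly_hom: map_poly_comm_ring_hom "of_rat :: rat \<Rightarrow> real" ..
  let ?s = "sqrt (of_int d) :: real"
  let ?x = "of_rat a + of_rat b * ?s"
  define m where "m = [:a * a - of_int d * b * b, - 2 * a, 1:]"
  define r where "r = P mod m"
  have rat_indep: "v = 0" if "of_rat u + of_rat v * ?s = 0" for u v
  proof (rule ccontr)
    assume "v \<noteq> 0"
    with that have "?s = of_rat (- u / v)" by (simp add: of_rat_divide of_rat_minus field_simps)
    with irr show False by simp
  qed
  have "?s * ?s = of_int d" using assms(2) by simp
  then have "poly (map_poly of_rat m) ?x = 0"
    by (simp add: m_def of_rat_mult of_rat_diff of_rat_add of_rat_minus algebra_simps)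
  moreover have "r = P - P div m * m" unfolding r_def by (rule minus_div_mult_eq_mod [symmetric])
  ultimately have root_r: "poly (map_poly of_rat r) ?x = 0"
    using root by (simp add: of_rat_poly_hom.hom_minus of_rat_poly_hom.hom_mult)
  have "m \<noteq> 0" and "degree m = 2" by (simp_all add: m_def)
  then have "r = 0 \<or> degree r < 2" using degree_mod_less[of m P] by (simp add: r_def)
  then have r: "r = [:Polynomial.coeff r 0, Polynomial.coeff r 1:]"
    by (intro poly_eqI) (auto simp: coeff_pCons coeff_eq_0 split: nat.split)
  from root_r have r_at_x: "of_rat (Polynomial.coeff r 0) + ?x * of_rat (Polynomial.coeff r 1) = 0"
    by (subst (asm) r) (simp add: hom_distribs)
  then have "of_rat (Polynomial.coeff r 0 + Polynomial.coeff r 1 * a)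
      + of_rat (Polynomial.coeff r 1 * b) * ?s = 0"
    by (simp add: of_rat_add of_rat_mult algebra_simps)
  with \<open>b \<noteq> 0\<close> have "Polynomial.coeff r 1 = 0" by (metis rat_indep mult_eq_0_iff)
  with r_at_x have "r = 0" by (subst r) simp
  then show ?thesis by (simp add: r_def m_def mod_eq_0_iff_dvd)
qed

lemma quadratic_root_of_monic_int_poly:
  fixes p :: "int poly" and a b :: rat and d :: int
  assumes irr: "sqrt (of_int d) \<notin> \<rat>" and "d \<ge> 0" and "b \<noteq> 0"
    and p: "lead_coeff p = 1"
      "poly (of_int_poly p) (of_rat a + of_rat b * sqrt (of_int d)) = (0::real)"
  shows "2 * a \<in> \<int>" and "a * a - of_int d * b * b \<in> \<int>"
proof -
  define m where "m = [:a * a - of_int d * b * b, - 2 * a, 1:]"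
  have "m dvd of_int_poly p"
    unfolding m_def using p(2)
    by (intro quadratic_min_poly_dvd[OF irr assms(2,3)]) (simp add: map_poly_map_poly o_def)
  then obtain h where "of_int_poly p = m * h" by (rule dvdE)
  moreover have "lead_coeff m = 1" by (simp add: m_def)
  ultimately obtain g where g: "m = of_int_poly g" by (rule monic_factor_of_monic_int_poly[OF p(1)])
  have "- (2 * a) = of_int (Polynomial.coeff g 1)"
    using arg_cong[OF g, of "\<lambda>q. Polynomial.coeff q 1"] by (simp add: m_def)
  then show "2 * a \<in> \<int>" by (metis Ints_minus Ints_of_int minus_minus)
  have "a * a - of_int d * b * b = of_int (Polynomial.coeff g 0)"
    using arg_cong[OF g, of "\<lambda>q. Polynomial.coeff q 0"] by (simp add: m_def)
  then show "a * a - of_int d * b * b \<in> \<int>" by simp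
qed

lemma ring_of_integers_half_integral:
  assumes "d > 1" and "squarefree d" and "x \<in> ring_of_integers d"
  obtains A B N :: int where "x = of_int A / 2 + of_int B / 2 * sqrt (of_int d)"
    and "A * A - d * (B * B) = 4 * N"
proof -
  from assms(3) obtain a b p where x: "x = of_rat a + of_rat b * sqrt (of_int d)"
    and p: "lead_coeff p = 1" "poly (of_int_poly p) x = 0"
    unfolding ring_of_integers_def quad_field_def by blast
  obtain A B N :: int where AB: "2 * a = of_int A" "2 * b = of_int B"
    and norm: "A * A - d * (B * B) = 4 * N"
  proof (cases "b = 0")
    case True
    have "poly (map_poly of_rat (of_int_poly p)) (of_rat a :: real) = 0"
      using p(2) True x by (simp add: map_poly_map_poly o_def)
    then have "poly (of_int_poly p) a = 0" by (simp only: of_rat_hom.poly_map_poly of_rat_eq_0_iff)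
    then obtain k where "a = of_int k" using rat_root_of_monic_int_poly[OF p(1)] Ints_cases by auto
    with True show thesis by (intro that[of "2 * k" 0 "k * k"]) simp_all
  next
    case False
    have irr: "sqrt (of_int d) \<notin> \<rat>" by (rule sqrt_squarefree_not_Rats[OF assms(1,2)])
    have "2 * a \<in> \<int>" and "a * a - of_int d * b * b \<in> \<int>"
      using quadratic_root_of_monic_int_poly[OF irr _ False p(1)] p(2) assms(1) x by simp_all
    then obtain A N where A: "2 * a = of_int A" and N: "a * a - of_int d * b * b = of_int N"
      by (metis Ints_cases)
    have "(2 * b) * (2 * b) * of_int d = of_int (A * A - 4 * N)"
      by (simp add: A[symmetric] N[symmetric] algebra_simps)
    then have "2 * b \<in> \<int>" by (rule square_mult_squarefree_Ints[OF assms(2)])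
    then obtain B where B: "2 * b = of_int B" by (metis Ints_cases)
    have "of_int (A * A - d * (B * B)) = (of_int (4 * N) :: rat)"
      by (simp add: A[symmetric] B[symmetric] N[symmetric] algebra_simps)
    then show thesis using that A B by (simp only: of_int_eq_iff)
  qed
  have "of_rat a = (of_int A / 2 :: real)" "of_rat b = (of_int B / 2 :: real)"
    using arg_cong[OF AB(1), of "of_rat :: rat \<Rightarrow> real"]
      arg_cong[OF AB(2), of "of_rat :: rat \<Rightarrow> real"]
    by (simp_all add: of_rat_mult)
  with x norm show thesis by (intro that) simp_all
qed

section \<open>The ring of integers\<close>

definition omega :: "int \<Rightarrow> real" where
  "omega d = (if d mod 4 = 1 then (1 + sqrt (of_int d)) / 2 else sqrt (of_int d))"

definition Z_omega :: "int \<Rightarrow> real set" where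
  "Z_omega d = {of_int a + of_int b * omega d | a b. True}"

lemma Z_omegaI: "of_int a + of_int b * omega d \<in> Z_omega d"
  unfolding Z_omega_def by blast

lemma Z_omegaE:
  assumes "x \<in> Z_omega d"
  obtains a b where "x = of_int a + of_int b * omega d"
  using assms unfolding Z_omega_def by blast

lemma ring_of_integers_subset_Z_omega:
  assumes "d > 1" and "squarefree d"
  shows "ring_of_integers d \<subseteq> Z_omega d"
proof
  let ?s = "sqrt (of_int d) :: real"
  fix x assume "x \<in> ring_of_integers d"
  with assms obtain A B N where x: "x = of_int A / 2 + of_int B / 2 * ?s"
    and norm: "A * A - d * (B * B) = 4 * N"
    by (rule ring_of_integers_half_integral)
  note parity = norm_form_parity[OF assms(2) norm]
  show "x \<in> Z_omega d"
  proof (cases "d mod 4 = 1")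
    case True
    with parity obtain k where "A - B = 2 * k" by (meson evenE)
    then have "A = 2 * k + B" by simp
    then have "x = of_int k + of_int B * omega d"
      using True by (simp add: x omega_def algebra_simps add_divide_distrib)
    then show ?thesis by (simp only: Z_omegaI)
  next
    case False
    with parity obtain k l where "A = 2 * k" "B = 2 * l" by (meson evenE)
    then have "x = of_int k + of_int l * omega d" using False by (simp add: x omega_def)
    then show ?thesis by (simp only: Z_omegaI)
  qed
qed

lemma omega_square:
  assumes "d \<ge> 0"
  obtains t c :: int where "omega d * omega d = of_int t * omega d + of_int c"
proof (cases "d mod 4 = 1")
  case True
  then have "d = 4 * ((d - 1) div 4) + 1" by presburger
  then have "real_of_int d = 4 * of_int ((d - 1) div 4) + 1"
    by (metis of_int_add of_int_mult of_int_numeral of_int_1)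
  with assms have "omega d * omega d = of_int 1 * omega d + of_int ((d - 1) div 4)"
    using True by (simp add: omega_def algebra_simps add_divide_distrib)
  then show thesis by (rule that)
next
  case False
  with assms have "omega d * omega d = of_int 0 * omega d + of_int d" by (simp add: omega_def)
  then show thesis by (rule that)
qed

lemma Z_omega_of_int: "of_int k \<in> Z_omega d"
  using Z_omegaI[of k 0 d] by simp

lemma Z_omega_add:
  assumes "x \<in> Z_omega d" and "y \<in> Z_omega d"
  shows "x + y \<in> Z_omega d"
proof -
  obtain a b e f where "x = of_int a + of_int b * omega d" and "y = of_int e + of_int f * omega d"
    using assms by (meson Z_omegaE)
  then have "x + y = of_int (a + e) + of_int (b + f) * omega d" by (simp add: algebra_simps)
  then show ?thesis by (simp only: Z_omegaI)
qed

lemma Z_omega_uminus: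
  assumes "x \<in> Z_omega d"
  shows "- x \<in> Z_omega d"
proof -
  obtain a b where "x = of_int a + of_int b * omega d" using assms by (rule Z_omegaE)
  then have "- x = of_int (- a) + of_int (- b) * omega d" by simp
  then show ?thesis by (simp only: Z_omegaI)
qed

lemma Z_omega_mult:
  assumes "d \<ge> 0" and "x \<in> Z_omega d" and "y \<in> Z_omega d"
  shows "x * y \<in> Z_omega d"
proof -
  obtain a b e f where "x = of_int a + of_int b * omega d" and "y = of_int e + of_int f * omega d"
    using assms(2,3) by (meson Z_omegaE)
  moreover obtain t c where "omega d * omega d = of_int t * omega d + of_int c"
    using assms(1) by (rule omega_square)
  ultimately have
    "x * y = of_int (a * e + b * f * c) + of_int (a * f + b * e + b * f * t) * omega d"
    by (simp add: algebra_simps)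
  then show ?thesis by (simp only: Z_omegaI)
qed

lemma Z_omega_subset_ring_of_integers:
  assumes "d \<ge> 0"
  shows "Z_omega d \<subseteq> ring_of_integers d"
proof
  fix x assume "x \<in> Z_omega d"
  then obtain a b where x: "x = of_int a + of_int b * omega d" by (rule Z_omegaE)
  obtain t c where omega: "omega d * omega d = of_int t * omega d + of_int c"
    using assms by (rule omega_square)
  obtain q r where "omega d = of_rat q + of_rat r * sqrt (of_int d)"
    by (cases "d mod 4 = 1")
      (auto simp: omega_def of_rat_divide add_divide_distrib
        intro: that[of 0 1] that[of "1/2" "1/2"])
  then have "x = of_rat (of_int a + of_int b * q) + of_rat (of_int b * r) * sqrt (of_int d)"
    by (simp add: x of_rat_add of_rat_mult algebra_simps)
  then have "x \<in> quad_field d" unfolding quad_field_def by blast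
  let ?p = "[:a * a + a * b * t - b * b * c, - (2 * a + b * t), 1:]"
  have "poly (of_int_poly ?p) x
      = of_int b * of_int b * (omega d * omega d - (of_int t * omega d + of_int c))"
    by (simp add: x hom_distribs algebra_simps)
  with omega have "poly (of_int_poly ?p) x = 0" by simp
  with \<open>x \<in> quad_field d\<close> show "x \<in> ring_of_integers d"
    unfolding ring_of_integers_def by (intro CollectI conjI exI[of _ ?p]) simp_all
qed

lemma int_units_inverse:
  assumes "v \<in> int_units d"
  shows "v \<noteq> 0" and "inverse v \<in> int_units d"
proof -
  from assms obtain w where "v \<in> ring_of_integers d" "w \<in> ring_of_integers d" "v * w = 1"
    unfolding int_units_def by blast
  moreover from this have "inverse v = w" by (simp add: inverse_unique)
  ultimately show "v \<noteq> 0" and "inverse v \<in> int_units d"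
    unfolding int_units_def by (auto simp: mult.commute)
qed

locale real_quadratic_field =
  fixes d :: int
  assumes d_gt_1: "d > 1" and squarefree_d: "squarefree d"
begin

lemma ring_of_integers_eq_Z_omega: "ring_of_integers d = Z_omega d"
  using d_gt_1 squarefree_d
  by (intro equalityI ring_of_integers_subset_Z_omega Z_omega_subset_ring_of_integers) simp_all

lemma ring_of_integers_of_int: "of_int k \<in> ring_of_integers d"
  by (simp add: ring_of_integers_eq_Z_omega Z_omega_of_int)

lemma ring_of_integers_1: "1 \<in> ring_of_integers d"
  using ring_of_integers_of_int[of 1] by simp

lemma ring_of_integers_add:
  "x \<in> ring_of_integers d \<Longrightarrow> y \<in> ring_of_integers d \<Longrightarrow> x + y \<in> ring_of_integers d"
  by (simp add: ring_of_integers_eq_Z_omega Z_omega_add)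

lemma ring_of_integers_uminus:
  "x \<in> ring_of_integers d \<Longrightarrow> - x \<in> ring_of_integers d"
  by (simp add: ring_of_integers_eq_Z_omega Z_omega_uminus)

lemma ring_of_integers_diff:
  "x \<in> ring_of_integers d \<Longrightarrow> y \<in> ring_of_integers d \<Longrightarrow> x - y \<in> ring_of_integers d"
  using ring_of_integers_add ring_of_integers_uminus by (metis diff_conv_add_uminus)

lemma ring_of_integers_mult:
  "x \<in> ring_of_integers d \<Longrightarrow> y \<in> ring_of_integers d \<Longrightarrow> x * y \<in> ring_of_integers d"
  using d_gt_1 by (simp add: ring_of_integers_eq_Z_omega Z_omega_mult)

lemma ring_of_integers_power:
  "x \<in> ring_of_integers d \<Longrightarrow> x ^ k \<in> ring_of_integers d"
  using ring_of_integers_of_int[of 1] by (induction k) (simp_all add: ring_of_integers_mult)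

lemma int_units_mult:
  assumes "v \<in> int_units d" and "w \<in> int_units d"
  shows "v * w \<in> int_units d"
proof -
  from assms obtain v' w' where "v \<in> ring_of_integers d" "v' \<in> ring_of_integers d" "v * v' = 1"
    and "w \<in> ring_of_integers d" "w' \<in> ring_of_integers d" "w * w' = 1"
    unfolding int_units_def by blast
  moreover from this have "(v * w) * (v' * w') = 1" by (simp add: algebra_simps)
  moreover have "v * w \<in> ring_of_integers d" and "v' * w' \<in> ring_of_integers d"
    using calculation by (simp_all add: ring_of_integers_mult)
  ultimately show ?thesis unfolding int_units_def by blast
qed

section \<open>Units congruent to one modulo two\<close>

definition one_mod_two :: "real \<Rightarrow> bool" where
  "one_mod_two v \<longleftrightarrow> (v - 1) / 2 \<in> ring_of_integers d"

lemma one_mod_two_1: "one_mod_two 1"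
  using ring_of_integers_of_int[of 0] by (simp add: one_mod_two_def)

lemma one_mod_two_uminus_iff: "one_mod_two (- v) \<longleftrightarrow> one_mod_two v"
proof -
  have minus: "- x - 1 \<in> ring_of_integers d" if "x \<in> ring_of_integers d" for x
    using ring_of_integers_diff[OF ring_of_integers_uminus[OF that] ring_of_integers_1] .
  have "(- v - 1) / 2 = - ((v - 1) / 2) - 1" and "(v - 1) / 2 = - ((- v - 1) / 2) - 1"
    by (simp_all add: field_simps)
  then show ?thesis unfolding one_mod_two_def by (metis minus)
qed

lemma one_mod_two_mult:
  assumes "v \<in> ring_of_integers d" and "one_mod_two v" and "one_mod_two w"
  shows "one_mod_two (v * w)"
proof -
  have "(v * w - 1) / 2 = v * ((w - 1) / 2) + (v - 1) / 2" by (simp add: field_simps)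
  also have "\<dots> \<in> ring_of_integers d"
    using assms unfolding one_mod_two_def by (intro ring_of_integers_add ring_of_integers_mult)
  finally show ?thesis unfolding one_mod_two_def .
qed

lemma one_mod_two_inverse:
  assumes "inverse v \<in> ring_of_integers d" and "one_mod_two v"
  shows "one_mod_two (inverse v)"
proof (cases "v = 0")
  case False
  then have "(inverse v - 1) / 2 = - (inverse v * ((v - 1) / 2))" by (simp add: field_simps)
  also have "\<dots> \<in> ring_of_integers d"
    using assms unfolding one_mod_two_def by (intro ring_of_integers_uminus ring_of_integers_mult)
  finally show ?thesis unfolding one_mod_two_def .
qed (use assms in simp)

lemma one_mod_two_power:
  assumes "v \<in> ring_of_integers d" and "one_mod_two v"
  shows "one_mod_two (v ^ k)"
  by (induction k) (simp_all add: one_mod_two_1 one_mod_two_mult assms)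

lemma one_mod_two_powi:
  assumes "v \<in> int_units d" and "one_mod_two v"
  shows "one_mod_two (v powi k)"
proof -
  have "inverse v \<in> ring_of_integers d" and "v \<in> ring_of_integers d"
    using assms(1) int_units_inverse(2) unfolding int_units_def by blast+
  with assms(2) show ?thesis
    by (simp add: power_int_def one_mod_two_power one_mod_two_inverse)
qed

lemma ring_of_integers_pigeonhole_mod_2:
  fixes f :: "nat \<Rightarrow> real"
  assumes "\<And>j. f j \<in> ring_of_integers d"
  shows "\<exists>i j. i < j \<and> (f i - f j) / 2 \<in> ring_of_integers d"
proof -
  have "\<forall>j. \<exists>ab. f j = of_int (fst ab) + of_int (snd ab) * omega d"
  proof
    fix j :: nat
    obtain a b where "f j = of_int a + of_int b * omega d"
      using assms[of j] unfolding ring_of_integers_eq_Z_omega by (rule Z_omegaE)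
    then show "\<exists>ab. f j = of_int (fst ab) + of_int (snd ab) * omega d"
      by (intro exI[of _ "(a, b)"]) simp
  qed
  from choice[OF this] obtain c
    where c: "\<forall>j. f j = of_int (fst (c j)) + of_int (snd (c j)) * omega d" ..
  define parity where "parity j = (fst (c j) mod 2, snd (c j) mod 2)" for j :: nat
  have "range parity \<subseteq> {0..1} \<times> {0..1}" by (auto simp: parity_def)
  then have "finite (range parity)" by (rule finite_subset) simp
  then have "\<not> inj parity" using finite_imageD infinite_UNIV_nat by blast
  then obtain i j where "i \<noteq> j" and "parity i = parity j" unfolding inj_def by blast
  then obtain i j where "i < j" and "parity i = parity j" by (metis linorder_neqE_nat)
  then have "2 dvd fst (c i) - fst (c j)" and "2 dvd snd (c i) - snd (c j)"
    by (simp_all add: parity_def mod_eq_dvd_iff)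
  then obtain k l where "fst (c i) - fst (c j) = 2 * k" and "snd (c i) - snd (c j) = 2 * l"
    by (meson dvdE)
  then have "(f i - f j) / 2 = of_int k + of_int l * omega d"
    using c by (simp add: algebra_simps flip: of_int_diff)
  then have "(f i - f j) / 2 \<in> ring_of_integers d"
    by (simp only: ring_of_integers_eq_Z_omega Z_omegaI)
  with \<open>i < j\<close> show ?thesis by blast
qed

lemma exists_power_one_mod_two:
  assumes "v \<in> int_units d"
  shows "\<exists>m \<ge> 1. one_mod_two (v ^ m)"
proof -
  have v: "v \<in> ring_of_integers d" and v': "inverse v \<in> ring_of_integers d"
    using assms int_units_inverse(2) unfolding int_units_def by blast+
  obtain i j where "i < j" and diff: "(v ^ i - v ^ j) / 2 \<in> ring_of_integers d"
    using ring_of_integers_pigeonhole_mod_2[of "power v"] ring_of_integers_power[OF v] by blast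
  have "v ^ j = v ^ i * v ^ (j - i)" using \<open>i < j\<close> by (simp flip: power_add)
  then have "(v ^ (j - i) - 1) / 2 = - (inverse v ^ i * ((v ^ i - v ^ j) / 2))"
    using int_units_inverse(1)[OF assms] by (simp add: field_simps power_inverse)
  also have "\<dots> \<in> ring_of_integers d"
    using diff ring_of_integers_power[OF v']
    by (intro ring_of_integers_uminus ring_of_integers_mult)
  finally have "one_mod_two (v ^ (j - i))" unfolding one_mod_two_def .
  with \<open>i < j\<close> show ?thesis by (intro exI[of _ "j - i"]) simp
qed

definition units_one_mod_two :: "real set" where
  "units_one_mod_two = {v \<in> int_units d. one_mod_two v}"

lemma units_one_mod_two_mult:
  assumes "v \<in> units_one_mod_two" and "w \<in> units_one_mod_two"
  shows "v * w \<in> units_one_mod_two"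
proof -
  have "v \<in> ring_of_integers d" using assms(1) by (simp add: units_one_mod_two_def int_units_def)
  with assms show ?thesis
    unfolding units_one_mod_two_def by (auto intro: int_units_mult one_mod_two_mult)
qed

lemma units_one_mod_two_inverse:
  assumes "v \<in> units_one_mod_two"
  shows "inverse v \<in> units_one_mod_two"
  using assms int_units_inverse(2)[of v d] unfolding units_one_mod_two_def int_units_def
  by (auto intro: one_mod_two_inverse)

lemma units_one_mod_two_1: "1 \<in> units_one_mod_two"
  and units_one_mod_two_minus_1: "-1 \<in> units_one_mod_two"
  using ring_of_integers_of_int[of 1] ring_of_integers_of_int[of "-1"] one_mod_two_1
  unfolding units_one_mod_two_def int_units_def by (auto simp: one_mod_two_uminus_iff)

lemma units_one_mod_two_nonzero: "v \<in> units_one_mod_two \<Longrightarrow> v \<noteq> 0"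
  unfolding units_one_mod_two_def by (auto dest: int_units_inverse(1))

end

section \<open>Units of augmentation one in the group ring\<close>

definition aug_one :: "real \<Rightarrow> real \<times> real" where
  "aug_one v = ((1 + v) / 2, (1 - v) / 2)"

lemma gr_mult_aug_one: "gr_mult (aug_one v) (aug_one w) = aug_one (v * w)"
  unfolding gr_mult_def aug_one_def by (simp add: field_simps)

lemma aug_one_1: "aug_one 1 = (1, 0)"
  unfolding aug_one_def by simp

lemma aug_one_inject: "aug_one v = aug_one w \<longleftrightarrow> v = w"
  unfolding aug_one_def by auto

lemma gen_g_eq_aug_one: "gen_g = aug_one (-1)"
  unfolding gen_g_def aug_one_def by simp

context real_quadratic_field
begin

lemma aug_one_in_ring:
  assumes "one_mod_two v"
  shows "aug_one v \<in> ring_of_integers d \<times> ring_of_integers d"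
proof -
  have half: "(v - 1) / 2 \<in> ring_of_integers d" using assms unfolding one_mod_two_def .
  have "(1 + v) / 2 = (v - 1) / 2 + 1" and "(1 - v) / 2 = - ((v - 1) / 2)"
    by (simp_all add: field_simps)
  moreover have "(v - 1) / 2 + 1 \<in> ring_of_integers d" and "- ((v - 1) / 2) \<in> ring_of_integers d"
    using ring_of_integers_add[OF half ring_of_integers_1] ring_of_integers_uminus[OF half] .
  ultimately have "(1 + v) / 2 \<in> ring_of_integers d" and "(1 - v) / 2 \<in> ring_of_integers d"
    by (simp_all only:)
  then show ?thesis unfolding aug_one_def by simp
qed

lemma U1_mult [simp]: "x \<otimes>\<^bsub>U1 d\<^esub> y = gr_mult x y"
  and U1_one [simp]: "\<one>\<^bsub>U1 d\<^esub> = aug_one 1"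
  by (simp_all add: U1_def aug_one_def)

lemma aug_one_in_U1:
  assumes "v \<in> units_one_mod_two"
  shows "aug_one v \<in> carrier (U1 d)"
proof -
  have "inverse v \<in> units_one_mod_two" using assms by (rule units_one_mod_two_inverse)
  then have "aug_one v \<in> carrier (group_ring_monoid d)"
    and "aug_one (inverse v) \<in> carrier (group_ring_monoid d)"
    using assms aug_one_in_ring unfolding units_one_mod_two_def group_ring_monoid_def by auto
  moreover have "gr_mult (aug_one (inverse v)) (aug_one v) = (1, 0)"
    and "gr_mult (aug_one v) (aug_one (inverse v)) = (1, 0)"
    using units_one_mod_two_nonzero[OF assms] by (simp_all add: gr_mult_aug_one aug_one_1)
  ultimately have "aug_one v \<in> Units (group_ring_monoid d)"
    unfolding Units_def
    by (intro CollectI conjI bexI[of _ "aug_one (inverse v)"]) (simp_all add: group_ring_monoid_def)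
  then show ?thesis unfolding U1_def by (simp add: aug_one_def add_divide_distrib [symmetric])
qed

lemma U1_carrier_in_aug_one_image:
  assumes "x \<in> carrier (U1 d)"
  shows "x \<in> aug_one ` units_one_mod_two"
proof -
  obtain a b where x: "x = (a, b)" by force
  from assms obtain c e where aug: "a + b = 1"
    and ab: "a \<in> ring_of_integers d" "b \<in> ring_of_integers d"
    and ce: "c \<in> ring_of_integers d" "e \<in> ring_of_integers d"
    and inv: "gr_mult (a, b) (c, e) = (1, 0)"
    unfolding U1_def Units_def group_ring_monoid_def x by auto
  have "(a - b) * (c - e) = 1" using inv by (simp add: gr_mult_def algebra_simps)
  then have "a - b \<in> int_units d"
    unfolding int_units_def using ab ce by (blast intro: ring_of_integers_diff)
  moreover have "(a - b - 1) / 2 = - b" using aug by (simp add: field_simps)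
  then have "one_mod_two (a - b)"
    unfolding one_mod_two_def using ring_of_integers_uminus[OF ab(2)] by (rule ssubst)
  moreover have "x = aug_one (a - b)" using aug by (simp add: x aug_one_def field_simps)
  ultimately show ?thesis unfolding units_one_mod_two_def by blast
qed

lemma carrier_U1: "carrier (U1 d) = aug_one ` units_one_mod_two"
  using U1_carrier_in_aug_one_image aug_one_in_U1 by blast

lemma comm_group_U1: "comm_group (U1 d)"
proof (rule comm_groupI)
  fix x y assume "x \<in> carrier (U1 d)" and "y \<in> carrier (U1 d)"
  then show "x \<otimes>\<^bsub>U1 d\<^esub> y \<in> carrier (U1 d)"
    by (auto simp: carrier_U1 gr_mult_aug_one intro: units_one_mod_two_mult)
next
  show "\<one>\<^bsub>U1 d\<^esub> \<in> carrier (U1 d)" by (simp add: carrier_U1 units_one_mod_two_1)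
next
  fix x y z
  show "x \<otimes>\<^bsub>U1 d\<^esub> y \<otimes>\<^bsub>U1 d\<^esub> z = x \<otimes>\<^bsub>U1 d\<^esub> (y \<otimes>\<^bsub>U1 d\<^esub> z)"
    by (simp add: gr_mult_def algebra_simps)
next
  fix x y
  show "x \<otimes>\<^bsub>U1 d\<^esub> y = y \<otimes>\<^bsub>U1 d\<^esub> x" by (simp add: gr_mult_def algebra_simps)
next
  fix x
  show "\<one>\<^bsub>U1 d\<^esub> \<otimes>\<^bsub>U1 d\<^esub> x = x" by (simp add: gr_mult_def aug_one_def)
next
  fix x assume "x \<in> carrier (U1 d)"
  then obtain v where v: "v \<in> units_one_mod_two" and x: "x = aug_one v" by (auto simp: carrier_U1)
  then have "aug_one (inverse v) \<in> carrier (U1 d)"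
    and "aug_one (inverse v) \<otimes>\<^bsub>U1 d\<^esub> x = \<one>\<^bsub>U1 d\<^esub>"
    using units_one_mod_two_nonzero
    by (simp_all add: carrier_U1 units_one_mod_two_inverse gr_mult_aug_one)
  then show "\<exists>y \<in> carrier (U1 d). y \<otimes>\<^bsub>U1 d\<^esub> x = \<one>\<^bsub>U1 d\<^esub>" by blast
qed

lemma group_U1: "group (U1 d)"
  using comm_group_U1 by (rule comm_group.axioms(2))

lemma U1_int_pow_aug_one:
  assumes "v \<in> units_one_mod_two"
  shows "aug_one v [^]\<^bsub>U1 d\<^esub> (k::int) = aug_one (v powi k)"
proof -
  interpret group "U1 d" by (rule group_U1)
  have nat_pow: "aug_one w [^]\<^bsub>U1 d\<^esub> (m::nat) = aug_one (w ^ m)" for w m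
    by (induction m) (simp_all add: gr_mult_aug_one mult.commute)
  have "inv\<^bsub>U1 d\<^esub> aug_one (v ^ m) = aug_one (inverse (v ^ m))" for m
  proof (rule inv_equality)
    have "v ^ m \<in> units_one_mod_two"
      using assms by (induction m) (simp_all add: units_one_mod_two_1 units_one_mod_two_mult)
    then show "aug_one (v ^ m) \<in> carrier (U1 d)" and "aug_one (inverse (v ^ m)) \<in> carrier (U1 d)"
      by (simp_all add: aug_one_in_U1 units_one_mod_two_inverse)
    show "aug_one (inverse (v ^ m)) \<otimes>\<^bsub>U1 d\<^esub> aug_one (v ^ m) = \<one>\<^bsub>U1 d\<^esub>"
      using units_one_mod_two_nonzero[OF assms] by (simp add: gr_mult_aug_one)
  qed
  then show ?thesis
    by (simp add: int_pow_def2 nat_pow power_int_def power_inverse)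
qed

end

section \<open>Powers of the fundamental unit\<close>

lemma minus_one_power_int_mod_2: "(-1 :: 'a :: division_ring) powi (i mod 2) = (-1) powi i"
  by (simp add: power_int_minus_left even_mod_2_iff)

lemma minus_one_power_int_mult_inject:
  fixes e :: real
  assumes "e > 1" and "i \<in> {0..<2}" and "j \<in> {0..<2}"
    and eq: "(-1) powi i * e powi a = (-1) powi j * e powi b"
  shows "i = j" and "a = b"
proof -
  have "e powi a > 0" and "e powi b > 0" using assms(1) by simp_all
  moreover have "i = 0 \<or> i = 1" and "j = 0 \<or> j = 1" using assms(2,3) by auto
  ultimately have ij: "i = j" and same: "e powi a = e powi b"
    using eq by (auto simp: power_int_minus_left)
  show "i = j" by (fact ij)
  show "a = b"
  proof (rule linorder_cases[of a b])
    assume "a < b"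
    with same show ?thesis using power_int_strict_increasing[OF _ assms(1), of a b] by simp
  next
    assume "b < a"
    with same show ?thesis using power_int_strict_increasing[OF _ assms(1), of b a] by simp
  qed
qed

locale real_quadratic_fundamental_unit = real_quadratic_field +
  fixes eps :: real
  assumes fundamental_unit: "fundamental_unit d eps"
begin

lemma eps_gt_1: "eps > 1"
  and int_units_eq: "int_units d = {s * eps powi k | s k. s \<in> {1, -1}}"
  using fundamental_unit unfolding fundamental_unit_def by (simp_all only:)

lemma eps_powi_unit: "eps powi k \<in> int_units d"
  unfolding int_units_eq by (intro CollectI exI[of _ 1] exI[of _ k]) simp

lemma order_mod_2_eq: "order_mod_2 d eps = (LEAST m. m \<ge> 1 \<and> one_mod_two (eps ^ m))"
  unfolding order_mod_2_def one_mod_two_def ..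

lemma order_mod_2: "order_mod_2 d eps \<ge> 1 \<and> one_mod_two (eps ^ order_mod_2 d eps)"
proof -
  have "\<exists>m \<ge> 1. one_mod_two (eps ^ m)"
    using exists_power_one_mod_two[OF eps_powi_unit[of 1]] by simp
  then show ?thesis unfolding order_mod_2_eq by (rule LeastI_ex)
qed

lemma order_mod_2_le:
  "m \<ge> 1 \<Longrightarrow> one_mod_two (eps ^ m) \<Longrightarrow> order_mod_2 d eps \<le> m"
  unfolding order_mod_2_eq by (rule Least_le) simp

lemma one_mod_two_eps_powi_iff:
  "one_mod_two (eps powi m) \<longleftrightarrow> int (order_mod_2 d eps) dvd m"
proof -
  let ?n = "order_mod_2 d eps"
  have multiple: "one_mod_two (eps powi (int ?n * q))" for q
  proof -
    have "eps ^ ?n \<in> int_units d" using eps_powi_unit[of "int ?n"] by simp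
    then have "one_mod_two ((eps ^ ?n) powi q)"
      using order_mod_2 one_mod_two_powi by blast
    then show ?thesis by (simp add: power_int_power)
  qed
  show ?thesis
  proof
    assume "int ?n dvd m"
    then show "one_mod_two (eps powi m)" using multiple by (auto elim: dvdE)
  next
    assume m: "one_mod_two (eps powi m)"
    define r where "r = m mod int ?n"
    have r: "0 \<le> r" "r < int ?n" using order_mod_2 by (simp_all add: r_def)
    have r_eq: "r = m + int ?n * - (m div int ?n)"
      unfolding r_def minus_div_mult_eq_mod [symmetric] by simp
    have "eps powi r = eps powi m * eps powi (int ?n * - (m div int ?n))"
      unfolding r_eq using eps_gt_1 by (subst power_int_add) auto
    moreover have "eps powi m \<in> ring_of_integers d"
      using eps_powi_unit unfolding int_units_def by blast
    ultimately have "one_mod_two (eps powi r)"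
      using one_mod_two_mult[OF _ m multiple] by (simp only:)
    then have "one_mod_two (eps ^ nat r)" using r(1) by (simp add: power_int_def)
    have "r = 0"
    proof (rule ccontr)
      assume "r \<noteq> 0"
      with r have "nat r \<ge> 1" by simp
      then have "order_mod_2 d eps \<le> nat r"
        using \<open>one_mod_two (eps ^ nat r)\<close> by (rule order_mod_2_le)
      with r show False by simp
    qed
    then show "int ?n dvd m" by (simp add: r_def dvd_eq_mod_eq_0)
  qed
qed

lemma units_one_mod_two_eq:
  "units_one_mod_two = {s * eps powi (int (order_mod_2 d eps) * k) | s k. s \<in> {1, -1}}"
proof -
  have sign: "one_mod_two (s * x) \<longleftrightarrow> one_mod_two x" if "s \<in> {1, -1}" for s x
    using that by (elim insertE) (simp_all add: one_mod_two_uminus_iff)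
  show ?thesis
  proof (intro equalityI subsetI)
    fix v assume "v \<in> units_one_mod_two"
    then obtain s m where s: "s \<in> {1, -1}" and v: "v = s * eps powi m" and "one_mod_two v"
      unfolding units_one_mod_two_def int_units_eq by blast
    then have "int (order_mod_2 d eps) dvd m"
      using sign[OF s, of "eps powi m"] one_mod_two_eps_powi_iff by blast
    then obtain k where "m = int (order_mod_2 d eps) * k" by (rule dvdE)
    with s v show "v \<in> {s * eps powi (int (order_mod_2 d eps) * k) | s k. s \<in> {1, -1}}"
      by blast
  next
    fix v assume "v \<in> {s * eps powi (int (order_mod_2 d eps) * k) | s k. s \<in> {1, -1}}"
    then obtain s k where s: "s \<in> {1, -1}" and v: "v = s * eps powi (int (order_mod_2 d eps) * k)"
      by blast
    then have "v \<in> int_units d" unfolding int_units_eq by blast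
    moreover have "one_mod_two v"
      using sign[OF s] one_mod_two_eps_powi_iff unfolding v by simp
    ultimately show "v \<in> units_one_mod_two" unfolding units_one_mod_two_def by blast
  qed
qed

definition U1_param :: "int \<times> int \<Rightarrow> real \<times> real" where
  "U1_param = (\<lambda>(i, k). aug_one ((-1) powi i * eps powi (int (order_mod_2 d eps) * k)))"

lemma U1_param_eq_word:
  "U1_param (i, k) =
     gen_g [^]\<^bsub>U1 d\<^esub> i \<otimes>\<^bsub>U1 d\<^esub> aug_one (eps ^ order_mod_2 d eps) [^]\<^bsub>U1 d\<^esub> k"
proof -
  have "eps ^ order_mod_2 d eps \<in> units_one_mod_two"
    unfolding units_one_mod_two_eq
    by (intro CollectI exI[of _ 1] exI[of _ 1]) (simp add: power_int_of_nat)
  then show ?thesis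
    by (simp add: U1_param_def gen_g_eq_aug_one U1_int_pow_aug_one units_one_mod_two_minus_1
        gr_mult_aug_one power_int_power)
qed

lemma U1_param_in_carrier: "U1_param x \<in> carrier (U1 d)"
proof -
  have "(-1) powi i \<in> {1, -1 :: real}" for i :: int by (simp add: power_int_minus_left)
  then show ?thesis
    by (cases x) (auto simp: U1_param_def carrier_U1 units_one_mod_two_eq)
qed

lemma carrier_U1_eq_param_image: "carrier (U1 d) = U1_param ` ({0..<2} \<times> UNIV)"
proof
  show "U1_param ` ({0..<2} \<times> UNIV) \<subseteq> carrier (U1 d)" using U1_param_in_carrier by blast
  show "carrier (U1 d) \<subseteq> U1_param ` ({0..<2} \<times> UNIV)"
  proof
    fix x assume "x \<in> carrier (U1 d)"
    then obtain s k where s: "s \<in> {1, -1}"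
      and x: "x = aug_one (s * eps powi (int (order_mod_2 d eps) * k))"
      by (auto simp: carrier_U1 units_one_mod_two_eq)
    define i :: int where "i = (if s = 1 then 0 else 1)"
    have "x = U1_param (i, k)" using s by (auto simp: x U1_param_def i_def)
    moreover have "(i, k) \<in> {0..<2} \<times> UNIV" by (simp add: i_def)
    ultimately show "x \<in> U1_param ` ({0..<2} \<times> UNIV)" by (rule image_eqI)
  qed
qed

lemma U1_param_mult:
  "U1_param ((i + j) mod 2, k + l) = gr_mult (U1_param (i, k)) (U1_param (j, l))"
proof -
  let ?n = "int (order_mod_2 d eps)"
  have "eps powi (?n * (k + l)) = eps powi (?n * k) * eps powi (?n * l)"
    using eps_gt_1 by (simp add: distrib_left power_int_add)
  moreover have "(-1 :: real) powi ((i + j) mod 2) = (-1) powi i * (-1) powi j"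
    by (simp add: minus_one_power_int_mod_2 power_int_add)
  ultimately show ?thesis by (simp add: U1_param_def gr_mult_aug_one mult_ac)
qed

lemma inj_on_U1_param: "inj_on U1_param ({0..<2} \<times> UNIV)"
proof (rule inj_onI, clarify)
  fix i k j l :: int
  let ?n = "int (order_mod_2 d eps)"
  assume "i \<in> {0..<2}" and "j \<in> {0..<2}" and "U1_param (i, k) = U1_param (j, l)"
  moreover from this have "(-1) powi i * eps powi (?n * k) = (-1) powi j * eps powi (?n * l)"
    by (simp add: U1_param_def aug_one_inject)
  ultimately have "i = j" and "?n * k = ?n * l"
    using minus_one_power_int_mult_inject[OF eps_gt_1] by blast+
  with order_mod_2 show "i = j \<and> k = l" by simp
qed

lemma U1_param_iso: "U1_param \<in> iso (DirProd (integer_mod_group 2) integer_group) (U1 d)"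
proof -
  have carrier: "carrier (DirProd (integer_mod_group 2) integer_group) = {0..<2} \<times> UNIV"
    by (simp add: carrier_integer_mod_group)
  have "U1_param \<in> hom (DirProd (integer_mod_group 2) integer_group) (U1 d)"
  proof (rule homI)
    fix x y :: "int \<times> int"
    show "U1_param x \<in> carrier (U1 d)" by (rule U1_param_in_carrier)
    obtain i k j l where "x = (i, k)" and "y = (j, l)" by force
    then show "U1_param (x \<otimes>\<^bsub>DirProd (integer_mod_group 2) integer_group\<^esub> y)
        = U1_param x \<otimes>\<^bsub>U1 d\<^esub> U1_param y"
      by (simp add: U1_param_mult)
  qed
  with inj_on_U1_param show ?thesis
    unfolding iso_def bij_betw_def carrier carrier_U1_eq_param_image by blast
qed

end

theorem mainTheorem5:
  fixes d :: int and eps :: real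
  assumes "d > 1" and "squarefree d"
    and "fundamental_unit d eps"
  defines "n \<equiv> order_mod_2 d eps"
  defines "u \<equiv> ((1 + eps ^ n) / 2, (1 - eps ^ n) / 2)"
  shows "group (U1 d) \<and>
         carrier (U1 d) = {gen_g [^]\<^bsub>U1 d\<^esub> (i::int) \<otimes>\<^bsub>U1 d\<^esub> u [^]\<^bsub>U1 d\<^esub> (k::int) | i k. True} \<and>
         (\<lambda>(i, k). gen_g [^]\<^bsub>U1 d\<^esub> (i::int) \<otimes>\<^bsub>U1 d\<^esub> u [^]\<^bsub>U1 d\<^esub> (k::int))
           \<in> iso (DirProd (integer_mod_group 2) integer_group) (U1 d)"
proof -
  interpret real_quadratic_fundamental_unit d eps
    using assms(1-3) by unfold_locales
  have word: "(\<lambda>(i, k). gen_g [^]\<^bsub>U1 d\<^esub> (i::int) \<otimes>\<^bsub>U1 d\<^esub> u [^]\<^bsub>U1 d\<^esub> (k::int)) = U1_param"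
    by (auto simp: u_def n_def aug_one_def U1_param_eq_word)
  have "carrier (U1 d) = range U1_param"
    using carrier_U1_eq_param_image U1_param_in_carrier by blast
  also have "\<dots> = {gen_g [^]\<^bsub>U1 d\<^esub> (i::int) \<otimes>\<^bsub>U1 d\<^esub> u [^]\<^bsub>U1 d\<^esub> (k::int) | i k. True}"
    unfolding word [symmetric] image_def by auto
  finally have carrier: "carrier (U1 d) = \<dots>" .
  with word U1_param_iso group_U1 show ?thesis by simp
qed

end
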